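(* There exists an integer $N$ such that for every set $P$ of $n\geq N$ points in general position in the plane, $\binom{n}{2}-5\leq \mu(D(P))\leq \binom{n}{2}-4$.
   Context: A set of points in the plane is in general position if no three of its points are collinear. The disjointness graph of segments $D(P)$ is the graph whose vertices are all closed straight-line segments with both endpoints in $P$, two being adjacent if and only if they are disjoint. For a graph $G$ and $U\subseteq V(G)$, two distinct vertices $x,y\in U$ are $U$-mutually visible if $G$ contains a shortest $x$-$y$ path none of whose internal vertices lies in $U$; $U$ is a mutual-visibility set if every two distinct vertices of $U$ are $U$-mutually visible. The mutual-visibility number $\mu(G)$ is the maximum size of a mutual-visibility set of $G$. *)

theory Defs
  imports "HOL-Analysis.Analysis"
begin

definition general_position :: "(real^2) set \<Rightarrow> bool" where
  "general_position P \<longleftrightarrow>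
     (\<forall>a\<in>P. \<forall>b\<in>P. \<forall>c\<in>P. a \<noteq> b \<and> a \<noteq> c \<and> b \<noteq> c \<longrightarrow> \<not> collinear {a, b, c})"

definition is_path :: "'v set \<Rightarrow> ('v \<Rightarrow> 'v \<Rightarrow> bool) \<Rightarrow> 'v \<Rightarrow> 'v \<Rightarrow> 'v list \<Rightarrow> bool" where
  "is_path V E x y p \<longleftrightarrow> p \<noteq> [] \<and> hd p = x \<and> last p = y \<and> set p \<subseteq> V
     \<and> (\<forall>i. Suc i < length p \<longrightarrow> E (p ! i) (p ! Suc i))"

definition shortest_path :: "'v set \<Rightarrow> ('v \<Rightarrow> 'v \<Rightarrow> bool) \<Rightarrow> 'v \<Rightarrow> 'v \<Rightarrow> 'v list \<Rightarrow> bool" where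
  "shortest_path V E x y p \<longleftrightarrow> is_path V E x y p
     \<and> (\<forall>q. is_path V E x y q \<longrightarrow> length p \<le> length q)"

definition mutually_visible :: "'v set \<Rightarrow> ('v \<Rightarrow> 'v \<Rightarrow> bool) \<Rightarrow> 'v set \<Rightarrow> 'v \<Rightarrow> 'v \<Rightarrow> bool" where
  "mutually_visible V E U x y \<longleftrightarrow>
     (\<exists>p. shortest_path V E x y p \<and> set (butlast (tl p)) \<inter> U = {})"

definition mutual_visibility_set :: "'v set \<Rightarrow> ('v \<Rightarrow> 'v \<Rightarrow> bool) \<Rightarrow> 'v set \<Rightarrow> bool" where
  "mutual_visibility_set V E U \<longleftrightarrow> U \<subseteq> V \<and>
     (\<forall>x\<in>U. \<forall>y\<in>U. x \<noteq> y \<longrightarrow> mutually_visible V E U x y)"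

definition mu :: "'v set \<Rightarrow> ('v \<Rightarrow> 'v \<Rightarrow> bool) \<Rightarrow> nat" where
  "mu V E = Max {card U | U. mutual_visibility_set V E U}"

text \<open>Disjointness graph of segments D(P): vertices are the closed segments with
  both (distinct) endpoints in P; two are adjacent iff they are disjoint.\<close>

definition seg_vertices :: "(real^2) set \<Rightarrow> (real^2) set set" where
  "seg_vertices P = {closed_segment a b | a b. a \<in> P \<and> b \<in> P \<and> a \<noteq> b}"

definition seg_disjoint :: "(real^2) set \<Rightarrow> (real^2) set \<Rightarrow> bool" where
  "seg_disjoint S T \<longleftrightarrow> S \<inter> T = {}"

end

theory Submission
  imports Defs "HOL-Library.Ramsey"
begin

text \<open>
  Ramsey's theorem for triples, applied to the orientations of triples of points, yields ten
  points of P in convex position, in this order. Each of the five edges joining the 2k-th and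
  the (2k+1)-th point has the other eight points strictly on one side of its line, so a segment between
  points of two other edges avoids it; since one of three collinear points lies between the
  other two, every segment meets at most two of the five edges. Hence any two vertices of D(P)
  have a common neighbour among these edges, and deleting them leaves a mutual-visibility set.
  Conversely, if U misses at most three segments, there are two segments in U with a common
  endpoint which together meet every segment outside U; all their common neighbours then lie
  in U, so no shortest path between them avoids U.
\<close>

definition orient :: "real^2 \<Rightarrow> real^2 \<Rightarrow> real^2 \<Rightarrow> real" where
  "orient a b c = (b$1 - a$1) * (c$2 - a$2) - (b$2 - a$2) * (c$1 - a$1)"

lemma orient_rotate: "orient a b c = orient b c a"
  by (simp add: orient_def algebra_simps)

lemma orient_convex_combination:
  "orient a b ((1 - t) *\<^sub>R u + t *\<^sub>R v) = (1 - t) * orient a b u + t * orient a b v"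
  by (simp add: orient_def algebra_simps)

lemma orient_eq_0_on_segment:
  assumes "z \<in> closed_segment a b"
  shows "orient a b z = 0"
proof -
  obtain t where "z = (1 - t) *\<^sub>R a + t *\<^sub>R b"
    using assms unfolding closed_segment_def by blast
  then show ?thesis
    by (simp add: orient_convex_combination) (simp add: orient_def)
qed

lemma orient_pos_on_segment:
  assumes "0 < s * orient a b u" "0 < s * orient a b v" "z \<in> closed_segment u v"
  shows "0 < s * orient a b z"
proof -
  obtain t where t: "0 \<le> t" "t \<le> 1" "z = (1 - t) *\<^sub>R u + t *\<^sub>R v"
    using assms(3) unfolding closed_segment_def by blast
  have "s * orient a b z = (1 - t) * (s * orient a b u) + t * (s * orient a b v)"
    unfolding t(3) orient_convex_combination by (simp add: algebra_simps)
  also have "\<dots> > 0"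
  proof (cases "t = 0")
    case False
    then show ?thesis
      using t assms(1,2) by (intro add_nonneg_pos) auto
  qed (use assms(1) in simp)
  finally show ?thesis .
qed

lemma collinear_if_orient_eq_0:
  assumes "orient a b c = 0"
  shows "collinear {a, b, c}"
proof -
  define u v where "u = b - a" and "v = c - a"
  have uv: "u$1 * v$2 = u$2 * v$1"
    using assms by (simp add: orient_def u_def v_def)
  have "u = 0 \<or> v = 0 \<or> (\<exists>t. v = t *\<^sub>R u)"
  proof (cases "u$1 = 0")
    case True
    show ?thesis
    proof (cases "u$2 = 0")
      case False
      with True uv have "v = (v$2 / u$2) *\<^sub>R u"
        by (simp add: vec_eq_iff forall_2)
      then show ?thesis by blast
    qed (use True in \<open>simp add: vec_eq_iff forall_2\<close>)
  next
    case False
    with uv have "v = (v$1 / u$1) *\<^sub>R u"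
      by (simp add: vec_eq_iff forall_2 field_simps)
    then show ?thesis by blast
  qed
  then have "collinear {0, b - a, c - a}"
    by (simp add: collinear_lemma u_def v_def)
  then have "collinear {b, a, c}"
    using collinear_3[of b a c] by simp
  then show ?thesis
    by (simp add: insert_commute)
qed

lemma general_position_orient_neq_0:
  assumes "general_position P" "a \<in> P" "b \<in> P" "c \<in> P" "a \<noteq> b" "a \<noteq> c" "b \<noteq> c"
  shows "orient a b c \<noteq> 0"
  using assms collinear_if_orient_eq_0 unfolding general_position_def by blast

definition convex_chain :: "nat \<Rightarrow> (nat \<Rightarrow> real^2) \<Rightarrow> real \<Rightarrow> bool" where
  "convex_chain r c s \<longleftrightarrow> inj_on c {..<r} \<and>
     (\<forall>i j k. i < j \<longrightarrow> j < k \<longrightarrow> k < r \<longrightarrow> 0 < s * orient (c i) (c j) (c k))"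

lemma convex_chain_side:
  assumes "convex_chain r c s" "Suc i < r" "j < r" "j \<noteq> i" "j \<noteq> Suc i"
  shows "0 < s * orient (c i) (c (Suc i)) (c j)"
proof (cases "j < i")
  case True
  then have "0 < s * orient (c j) (c i) (c (Suc i))"
    using assms unfolding convex_chain_def by auto
  then show ?thesis by (simp add: orient_rotate)
next
  case False
  then show ?thesis using assms unfolding convex_chain_def by auto
qed

definition chain_edge :: "(nat \<Rightarrow> real^2) \<Rightarrow> nat \<Rightarrow> (real^2) set" where
  "chain_edge c k = closed_segment (c (2*k)) (c (2*k+1))"

lemma chain_edge_side:
  assumes "convex_chain (2*m) c s" "j < m" "k < m" "j \<noteq> k" "z \<in> chain_edge c j"
  shows "0 < s * orient (c (2*k)) (c (2*k+1)) z"
proof -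
  have "0 < s * orient (c (2*k)) (c (2*k+1)) (c (2*j))"
    and "0 < s * orient (c (2*k)) (c (2*k+1)) (c (2*j+1))"
    using assms(2-4) by (auto intro!: convex_chain_side[OF assms(1)])
  then show ?thesis
    using orient_pos_on_segment assms(5) unfolding chain_edge_def by blast
qed

lemma chain_edge_disjoint_segment:
  assumes "convex_chain (2*m) c s" "i < m" "j < m" "k < m" "i \<noteq> k" "j \<noteq> k"
    and "z \<in> chain_edge c i" "z' \<in> chain_edge c j"
  shows "closed_segment z z' \<inter> chain_edge c k = {}"
proof -
  have "0 < s * orient (c (2*k)) (c (2*k+1)) w" if "w \<in> closed_segment z z'" for w
    using orient_pos_on_segment[OF chain_edge_side[OF assms(1,2,4,5,7)]
        chain_edge_side[OF assms(1,3,4,6,8)] that] .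
  moreover have "orient (c (2*k)) (c (2*k+1)) w = 0" if "w \<in> chain_edge c k" for w
    using that orient_eq_0_on_segment unfolding chain_edge_def by blast
  ultimately show ?thesis
    by fastforce
qed

lemma chain_edges_disjoint:
  assumes "convex_chain (2*m) c s" "j < m" "k < m" "j \<noteq> k"
  shows "chain_edge c j \<inter> chain_edge c k = {}"
proof -
  have "z \<notin> chain_edge c k" if "z \<in> chain_edge c j" for z
    using chain_edge_disjoint_segment[OF assms(1,2,2,3,4,4) that that] by simp
  then show ?thesis by blast
qed

lemma collinear_meets_at_most_two_chain_edges:
  assumes "convex_chain (2*m) c s" "collinear S"
  shows "card {k. k < m \<and> S \<inter> chain_edge c k \<noteq> {}} \<le> 2" (is "card ?K \<le> 2")
proof (rule ccontr)
  assume "\<not> card ?K \<le> 2"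
  then have "3 \<le> card ?K" by simp
  then obtain K where K: "K \<subseteq> ?K" "card K = 3"
    by (rule obtain_subset_with_card_n)
  then obtain k1 k2 k3 where k: "K = {k1, k2, k3}" "k1 \<noteq> k2" "k1 \<noteq> k3" "k2 \<noteq> k3"
    by (auto simp: card_3_iff)
  then have "k1 \<in> ?K" "k2 \<in> ?K" "k3 \<in> ?K"
    using K(1) by auto
  then obtain z1 z2 z3 where z: "z1 \<in> S \<inter> chain_edge c k1" "z2 \<in> S \<inter> chain_edge c k2"
      "z3 \<in> S \<inter> chain_edge c k3" and km: "k1 < m" "k2 < m" "k3 < m"
    by blast
  have "collinear {z1, z2, z3}"
    using z by (intro collinear_subset[OF assms(2)]) auto
  then consider "z1 \<in> closed_segment z2 z3" | "z2 \<in> closed_segment z3 z1"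
    | "z3 \<in> closed_segment z1 z2"
    unfolding collinear_between_cases between_mem_segment by blast
  then show False
  proof cases
    case 1
    then show False
      using chain_edge_disjoint_segment[OF assms(1), of k2 k3 k1 z2 z3] z k km by blast
  next
    case 2
    then show False
      using chain_edge_disjoint_segment[OF assms(1), of k3 k1 k2 z3 z1] z k km by blast
  next
    case 3
    then show False
      using chain_edge_disjoint_segment[OF assms(1), of k1 k2 k3 z1 z2] z k km by blast
  qed
qed

lemma two_collinear_sets_avoid_chain_edge:
  assumes "convex_chain (2*m) c s" "5 \<le> m" "collinear S" "collinear T"
  shows "\<exists>k<m. S \<inter> chain_edge c k = {} \<and> T \<inter> chain_edge c k = {}"
proof (rule ccontr)
  let ?K = "\<lambda>S. {k. k < m \<and> S \<inter> chain_edge c k \<noteq> {}}"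
  assume "\<not> ?thesis"
  then have "{..<m} \<subseteq> ?K S \<union> ?K T" by auto
  then have "card {..<m} \<le> card (?K S \<union> ?K T)"
    by (rule card_mono[rotated]) auto
  then have "m \<le> card (?K S \<union> ?K T)" by simp
  also have "\<dots> \<le> card (?K S) + card (?K T)"
    by (rule card_Un_le)
  also have "\<dots> \<le> 4"
    using collinear_meets_at_most_two_chain_edges[OF assms(1) assms(3)]
      collinear_meets_at_most_two_chain_edges[OF assms(1) assms(4)] by simp
  finally show False using assms(2) by simp
qed

lemma ramsey_increasing_triples:
  fixes r :: nat
  shows "\<exists>N. \<forall>n\<ge>N. \<forall>Q :: nat \<Rightarrow> nat \<Rightarrow> nat \<Rightarrow> bool. \<exists>h b. h ` {..<r} \<subseteq> {..<n} \<and>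
     strict_mono_on {..<r} h \<and> (\<forall>i j k. i < j \<longrightarrow> j < k \<longrightarrow> k < r \<longrightarrow> Q (h i) (h j) (h k) = b)"
proof -
  obtain N :: nat where N: "partn_lst {..<N} [r, r] 3"
    using ramsey_full[of "[r, r]" 3] by blast
  have "\<exists>h b. h ` {..<r} \<subseteq> {..<n} \<and> strict_mono_on {..<r} h \<and>
      (\<forall>i j k. i < j \<longrightarrow> j < k \<longrightarrow> k < r \<longrightarrow> Q (h i) (h j) (h k) = b)"
    if Nn: "N \<le> n" for n and Q :: "nat \<Rightarrow> nat \<Rightarrow> nat \<Rightarrow> bool"
  proof -
    define f where "f X = (let L = sorted_list_of_set X in if Q (L!0) (L!1) (L!2) then 0 else 1::nat)"
      for X
    have "f \<in> nsets {..<n} 3 \<rightarrow> {..<length [r, r]}"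
      by (simp add: f_def Let_def)
    then obtain col H where col: "col < length [r, r]" and "H \<in> nsets {..<n} ([r, r] ! col)"
      and hom: "f ` nsets H 3 \<subseteq> {col}"
      by (rule partn_lstE[OF partn_lst_greater_resource[OF N Nn] _ refl])
    moreover have "[r, r] ! col = r"
      using col by (auto simp: less_Suc_eq)
    ultimately have H: "H \<subseteq> {..<n}" "finite H" "card H = r"
      by (auto simp: nsets_def)
    define h where "h i = sorted_list_of_set H ! i" for i
    have mono: "strict_mono_on {..<r} h"
      unfolding strict_mono_on_def h_def
      using sorted_wrt_nth_less[OF strict_sorted_list_of_set[of H]] H by simp
    have hH: "h i \<in> H" if "i < r" for i
      using that H nth_mem[of i "sorted_list_of_set H"] unfolding h_def by simp
    have "Q (h i) (h j) (h k) = (col = 0)" if ijk: "i < j" "j < k" "k < r" for i j k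
    proof -
      have hijk: "h i < h j" "h j < h k"
        using mono ijk by (auto simp: strict_mono_on_def)
      then have "sorted_list_of_set {h i, h j, h k} = [h i, h j, h k]"
        by (subst sorted_list_of_set_unique[symmetric]) auto
      moreover have "{h i, h j, h k} \<in> nsets H 3"
        using hijk hH ijk by (simp add: nsets_def)
      then have "f {h i, h j, h k} = col"
        using hom by blast
      ultimately show ?thesis
        using col by (auto simp: f_def split: if_splits)
    qed
    then show ?thesis
      using mono hH H(1) by blast
  qed
  then show ?thesis by blast
qed

lemma ramsey_convex_chain:
  "\<exists>N. \<forall>P. finite P \<and> N \<le> card P \<and> general_position P \<longrightarrow>
     (\<exists>c s. c ` {..<r} \<subseteq> P \<and> convex_chain r c s)"
proof -
  obtain N where N: "\<forall>n\<ge>N. \<forall>Q :: nat \<Rightarrow> nat \<Rightarrow> nat \<Rightarrow> bool. \<exists>h b. h ` {..<r} \<subseteq> {..<n} \<and>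
     strict_mono_on {..<r} h \<and> (\<forall>i j k. i < j \<longrightarrow> j < k \<longrightarrow> k < r \<longrightarrow> Q (h i) (h j) (h k) = b)"
    using ramsey_increasing_triples by blast
  have "\<exists>c s. c ` {..<r} \<subseteq> P \<and> convex_chain r c s"
    if P: "finite P" "N \<le> card P" "general_position P" for P
  proof -
    obtain e where e: "bij_betw e {..<card P} P"
      using ex_bij_betw_nat_finite[OF P(1)] by (auto simp: atLeast0LessThan)
    obtain h b where h: "h ` {..<r} \<subseteq> {..<card P}" "strict_mono_on {..<r} h"
      and b: "\<And>i j k. i < j \<Longrightarrow> j < k \<Longrightarrow> k < r \<Longrightarrow> (0 < orient (e (h i)) (e (h j)) (e (h k))) = b"
      using N[rule_format, OF P(2), of "\<lambda>i j k. 0 < orient (e i) (e j) (e k)"] by blast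
    define c where "c = e \<circ> h"
    define s where "s = (if b then 1 else -1 :: real)"
    have cP: "c ` {..<r} \<subseteq> P"
      using h(1) bij_betw_imp_surj_on[OF e] unfolding c_def by auto
    have inj: "inj_on c {..<r}"
      unfolding c_def using strict_mono_on_imp_inj_on[OF h(2)] bij_betw_imp_inj_on[OF e] h(1)
      by (auto intro: comp_inj_on inj_on_subset)
    have "0 < s * orient (c i) (c j) (c k)" if ijk: "i < j" "j < k" "k < r" for i j k
    proof -
      have "orient (c i) (c j) (c k) \<noteq> 0"
        using ijk cP inj_onD[OF inj, of i j] inj_onD[OF inj, of i k] inj_onD[OF inj, of j k]
        by (intro general_position_orient_neq_0[OF P(3)]) auto
      then show ?thesis
        using b[OF ijk] unfolding s_def c_def by auto
    qed
    then show ?thesis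
      using cP inj unfolding convex_chain_def by blast
  qed
  then show ?thesis by blast
qed

lemma is_path_length_ge_2:
  assumes "is_path V E x y p" "x \<noteq> y"
  shows "2 \<le> length p"
  using assms unfolding is_path_def by (cases p rule: remdups_adj.cases) auto

lemma is_path_length_ge_3:
  assumes "is_path V E x y p" "x \<noteq> y" "\<not> E x y"
  shows "3 \<le> length p"
proof (rule ccontr)
  assume "\<not> 3 \<le> length p"
  then have "length p = 2"
    using is_path_length_ge_2[OF assms(1,2)] by simp
  then obtain a b where "p = [a, b]"
    by (cases p rule: remdups_adj.cases) auto
  then show False
    using assms unfolding is_path_def by (auto dest: spec[of _ 0])
qed

lemma is_path_2: "x \<in> V \<Longrightarrow> y \<in> V \<Longrightarrow> E x y \<Longrightarrow> is_path V E x y [x, y]"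
  unfolding is_path_def by (auto simp: less_Suc_eq)

lemma is_path_3:
  "x \<in> V \<Longrightarrow> y \<in> V \<Longrightarrow> z \<in> V \<Longrightarrow> E x z \<Longrightarrow> E z y \<Longrightarrow> is_path V E x y [x, z, y]"
  unfolding is_path_def by (auto simp: less_Suc_eq nth_Cons')

definition common_neighbours_in :: "'v set \<Rightarrow> ('v \<Rightarrow> 'v \<Rightarrow> bool) \<Rightarrow> 'v set \<Rightarrow> bool" where
  "common_neighbours_in V E W \<longleftrightarrow> (\<forall>x\<in>V. \<forall>y\<in>V. \<exists>z\<in>W. E x z \<and> E z y)"

lemma mutual_visibility_set_Diff:
  assumes "W \<subseteq> V" "common_neighbours_in V E W"
  shows "mutual_visibility_set V E (V - W)"
  unfolding mutual_visibility_set_def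
proof (intro conjI ballI impI)
  fix x y assume x: "x \<in> V - W" and y: "y \<in> V - W" and "x \<noteq> y"
  show "mutually_visible V E (V - W) x y"
  proof (cases "E x y")
    case True
    have "length [x, y] \<le> length q" if "is_path V E x y q" for q
      using is_path_length_ge_2[OF that \<open>x \<noteq> y\<close>] by simp
    then have "shortest_path V E x y [x, y]"
      using x y True is_path_2[of x V y E] unfolding shortest_path_def by auto
    then show ?thesis
      unfolding mutually_visible_def by fastforce
  next
    case False
    obtain z where z: "z \<in> W" "E x z" "E z y"
      using assms(2) x y unfolding common_neighbours_in_def by blast
    have "length [x, z, y] \<le> length q" if "is_path V E x y q" for q
      using is_path_length_ge_3[OF that \<open>x \<noteq> y\<close> False] by simp
    then have "shortest_path V E x y [x, z, y]"
      using x y z assms(1) is_path_3[of x V y z E] unfolding shortest_path_def by auto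
    then show ?thesis
      unfolding mutually_visible_def using z(1) by fastforce
  qed
qed blast

lemma not_mutually_visible:
  assumes "x \<in> V" "y \<in> V" "x \<noteq> y" "\<not> E x y" "z \<in> V" "E x z" "E z y"
    and "\<And>w. w \<in> V \<Longrightarrow> E x w \<Longrightarrow> E w y \<Longrightarrow> w \<in> U"
  shows "\<not> mutually_visible V E U x y"
proof
  assume "mutually_visible V E U x y"
  then obtain p where p: "shortest_path V E x y p" "set (butlast (tl p)) \<inter> U = {}"
    unfolding mutually_visible_def by blast
  have "length p \<le> 3"
    using p(1) is_path_3[OF assms(1,2,5-7)] unfolding shortest_path_def by fastforce
  moreover have path: "is_path V E x y p"
    using p(1) unfolding shortest_path_def by blast
  ultimately have "length p = 3"
    using is_path_length_ge_3[OF path assms(3,4)] by simp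
  then obtain w where "p = [x, w, y]"
    using path unfolding is_path_def
    by (cases p rule: remdups_adj.cases; cases "tl (tl p)") auto
  moreover have "w \<in> V" "E x w" "E w y"
    using path unfolding \<open>p = [x, w, y]\<close> is_path_def by (auto dest: spec[of _ 0] spec[of _ 1])
  ultimately show False
    using p(2) assms(8) by auto
qed

lemma finite_mutual_visibility_cards:
  "finite V \<Longrightarrow> finite {card U | U. mutual_visibility_set V E U}"
  by (rule finite_subset[of _ "{..card V}"])
    (auto simp: mutual_visibility_set_def intro: card_mono)

lemma card_le_mu:
  "finite V \<Longrightarrow> mutual_visibility_set V E U \<Longrightarrow> card U \<le> mu V E"
  unfolding mu_def by (rule Max_ge[OF finite_mutual_visibility_cards]) auto

lemma mu_attained:
  assumes "finite V"
  obtains U where "mutual_visibility_set V E U" "card U = mu V E"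
proof -
  have "mutual_visibility_set V E {}"
    unfolding mutual_visibility_set_def by simp
  then have "mu V E \<in> {card U | U. mutual_visibility_set V E U}"
    unfolding mu_def by (intro Max_in finite_mutual_visibility_cards assms) auto
  then show ?thesis
    using that by auto
qed

lemma card_Diff_le_mu:
  assumes "finite V" "W \<subseteq> V" "common_neighbours_in V E W"
  shows "card V - card W \<le> mu V E"
  using card_le_mu[OF assms(1) mutual_visibility_set_Diff[OF assms(2,3)]]
  by (simp add: card_Diff_subset[OF finite_subset[OF assms(2,1)] assms(2)])

lemma exists_hitting_pairs_if_two_point_cover:
  assumes "finite P" "9 \<le> card P" "W \<subseteq> nsets P 2" "card W \<le> 3"
    and "q \<in> P" "r \<in> P" "q \<noteq> r" "\<forall>w\<in>W. q \<in> w \<or> r \<in> w"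
  shows "\<exists>e\<in>nsets P 2 - W. \<exists>f\<in>nsets P 2 - W. e \<noteq> f \<and> e \<inter> f \<noteq> {} \<and> (\<forall>w\<in>W. w \<inter> (e \<union> f) \<noteq> {})"
proof -
  have "card (\<Union>W) \<le> sum card W"
    using assms(3) by (intro card_Union_le_sum_card_weak) (auto simp: nsets_def)
  also have "\<dots> = 2 * card W"
    using assms(3) by (simp add: nsets_def subset_iff)
  finally have "card (\<Union>W) + card {q, r} \<le> 8"
    using assms(4,7) by simp
  then have "card (\<Union>W \<union> {q, r}) \<le> 8"
    using card_Un_le[of "\<Union>W" "{q, r}"] by linarith
  moreover have "\<Union>W \<subseteq> P"
    using assms(3) by (auto simp: nsets_def)
  then have "finite (\<Union>W \<union> {q, r})"
    using finite_subset[OF _ assms(1)] by simp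
  ultimately have "\<not> P \<subseteq> \<Union>W \<union> {q, r}"
    using card_mono[of "\<Union>W \<union> {q, r}" P] assms(2) by linarith
  then obtain p where p: "p \<in> P" "p \<notin> \<Union>W" "p \<noteq> q" "p \<noteq> r"
    by blast
  have "{p, q} \<in> nsets P 2 - W" "{p, r} \<in> nsets P 2 - W"
    using p assms(5,6) by auto
  moreover have "{p, q} \<noteq> {p, r}" "{p, q} \<inter> {p, r} \<noteq> {}"
    using p assms(7) by (auto simp: doubleton_eq_iff)
  moreover have "\<forall>w\<in>W. w \<inter> ({p, q} \<union> {p, r}) \<noteq> {}"
    using assms(8) by blast
  ultimately show ?thesis
    by meson
qed

lemma exists_hitting_pairs_if_no_two_point_cover:
  assumes "finite P" "W \<subseteq> nsets P 2" "card W \<le> 3" "W \<noteq> {}"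
    and no_cover: "\<And>q r. q \<in> P \<Longrightarrow> r \<in> P \<Longrightarrow> q \<noteq> r \<Longrightarrow> \<exists>w\<in>W. q \<notin> w \<and> r \<notin> w"
  shows "\<exists>e\<in>nsets P 2 - W. \<exists>f\<in>nsets P 2 - W. e \<noteq> f \<and> e \<inter> f \<noteq> {} \<and> (\<forall>w\<in>W. w \<inter> (e \<union> f) \<noteq> {})"
proof -
  have pair: "\<exists>a b. w = {a, b} \<and> a \<in> P \<and> b \<in> P \<and> a \<noteq> b" if "w \<in> W" for w
  proof -
    have "w \<in> nsets P 2"
      using assms(2) that by (rule subsetD)
    then show ?thesis
      by (rule nsets2_E) blast
  qed
  obtain w1 where "w1 \<in> W"
    using assms(4) by blast
  then obtain a1 b1 where w1: "w1 \<in> W" "w1 = {a1, b1}" "a1 \<in> P" "b1 \<in> P" "a1 \<noteq> b1"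
    using pair by blast
  obtain w2 a2 b2 where w2: "w2 \<in> W" "a1 \<notin> w2" "b1 \<notin> w2" "w2 = {a2, b2}" "a2 \<in> P"
    using no_cover[OF w1(3-5)] pair by blast
  have "a1 \<noteq> a2"
    using w2 by blast
  then obtain w3 a3 b3 where w3: "w3 \<in> W" "a1 \<notin> w3" "a2 \<notin> w3" "w3 = {a3, b3}" "a3 \<in> P"
    using no_cover[OF w1(3) w2(5)] pair by blast
  have "w1 \<noteq> w2" "w1 \<noteq> w3" "w2 \<noteq> w3"
    using w1(2) w2 w3 by auto
  then have "{w1, w2, w3} \<subseteq> W" "card {w1, w2, w3} = 3"
    using w1(1) w2(1) w3(1) by auto
  moreover have "finite W"
    using finite_subset[OF assms(2) finite_imp_finite_nsets[OF assms(1)]] .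
  ultimately have W: "W = {w1, w2, w3}"
    using card_seteq assms(3) by metis
  have "a2 \<noteq> a3"
    using w3 by blast
  then obtain w where "w \<in> W" "a2 \<notin> w" "a3 \<notin> w"
    using no_cover[OF w2(5) w3(5)] by blast
  then have a23: "a2 \<notin> w1" "a3 \<notin> w1"
    using W w2(4) w3(4) by auto
  have "{a1, a2} \<notin> W" "{a1, a3} \<notin> W"
    unfolding W using a23 w2(2) w3(2) by auto
  then have "{a1, a2} \<in> nsets P 2 - W" "{a1, a3} \<in> nsets P 2 - W"
    using w1(3) w2(5) w3(5) \<open>a1 \<noteq> a2\<close> w3(2,4) by auto
  moreover have "{a1, a2} \<noteq> {a1, a3}" "{a1, a2} \<inter> {a1, a3} \<noteq> {}"
    using \<open>a1 \<noteq> a2\<close> \<open>a2 \<noteq> a3\<close> by (auto simp: doubleton_eq_iff)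
  moreover have "\<forall>w\<in>W. w \<inter> ({a1, a2} \<union> {a1, a3}) \<noteq> {}"
    using W w1(2) w2(4) w3(4) by blast
  ultimately show ?thesis
    by meson
qed

lemma exists_hitting_pairs:
  assumes "finite P" "9 \<le> card P" "W \<subseteq> nsets P 2" "card W \<le> 3"
  shows "\<exists>e\<in>nsets P 2 - W. \<exists>f\<in>nsets P 2 - W. e \<noteq> f \<and> e \<inter> f \<noteq> {} \<and> (\<forall>w\<in>W. w \<inter> (e \<union> f) \<noteq> {})"
proof (cases "\<exists>q\<in>P. \<exists>r\<in>P. q \<noteq> r \<and> (\<forall>w\<in>W. q \<in> w \<or> r \<in> w)")
  case True
  then obtain q r where "q \<in> P" "r \<in> P" "q \<noteq> r" "\<forall>w\<in>W. q \<in> w \<or> r \<in> w"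
    by blast
  then show ?thesis
    by (rule exists_hitting_pairs_if_two_point_cover[OF assms])
next
  case False
  have "2 \<le> card P"
    using assms(2) by simp
  then obtain Q where "Q \<subseteq> P" "card Q = 2"
    by (rule obtain_subset_with_card_n)
  then obtain q r where "q \<in> P" "r \<in> P" "q \<noteq> r"
    by (auto simp: card_2_iff)
  then have "W \<noteq> {}"
    using False by blast
  moreover have "\<exists>w\<in>W. q \<notin> w \<and> r \<notin> w"
    if "q \<in> P" "r \<in> P" "q \<noteq> r" for q r
    using False that by blast
  ultimately show ?thesis
    by (rule exists_hitting_pairs_if_no_two_point_cover[OF assms(1,3,4)])
qed

lemma seg_vertices_eq_convex_hull_nsets:
  "seg_vertices P = (\<lambda>e. convex hull e) ` nsets P 2"
proof -
  have "closed_segment a b = convex hull {a, b}" for a b :: "real^2"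
    by (rule segment_convex_hull)
  then show ?thesis
    unfolding seg_vertices_def nsets_2_eq by blast
qed

lemma bij_betw_convex_hull_seg_vertices:
  "bij_betw (\<lambda>e. convex hull e) (nsets P 2) (seg_vertices P)"
proof -
  have "inj_on (\<lambda>e. convex hull e) (nsets P 2)"
  proof (rule inj_onI)
    fix e f assume "e \<in> nsets P 2" "f \<in> nsets P 2" "convex hull e = convex hull f"
    then obtain a b a' b' where "e = {a, b}" "f = {a', b'}"
      "closed_segment a b = closed_segment a' b'"
      by (metis nsets2_E segment_convex_hull)
    then show "e = f"
      by (simp add: closed_segment_eq)
  qed
  then show ?thesis
    unfolding bij_betw_def seg_vertices_eq_convex_hull_nsets by blast
qed

lemma finite_seg_vertices: "finite P \<Longrightarrow> finite (seg_vertices P)"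
  by (simp add: seg_vertices_eq_convex_hull_nsets finite_imp_finite_nsets)

lemma card_seg_vertices: "card (seg_vertices P) = card P choose 2"
  using bij_betw_same_card[OF bij_betw_convex_hull_seg_vertices] by simp

lemma chain_edge_in_seg_vertices:
  assumes "c ` {..<2*m} \<subseteq> P" "convex_chain (2*m) c s" "k < m"
  shows "chain_edge c k \<in> seg_vertices P"
proof -
  have "c (2*k) \<noteq> c (2*k+1)"
    using assms(2,3) inj_onD[of c "{..<2*m}" "2*k" "2*k+1"] unfolding convex_chain_def by auto
  moreover have "c (2*k) \<in> P" "c (2*k+1) \<in> P"
    using assms(1,3) by auto
  ultimately show ?thesis
    unfolding chain_edge_def seg_vertices_def by blast
qed

lemma ramsey_common_disjoint_segments:
  "\<exists>N. \<forall>P. finite P \<and> N \<le> card P \<and> general_position P \<longrightarrow>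
     (\<exists>W\<subseteq>seg_vertices P. card W = 5 \<and> common_neighbours_in (seg_vertices P) seg_disjoint W)"
proof -
  obtain N where N: "\<forall>P. finite P \<and> N \<le> card P \<and> general_position P \<longrightarrow>
      (\<exists>c s. c ` {..<2*5} \<subseteq> P \<and> convex_chain (2*5) c s)"
    using ramsey_convex_chain by blast
  have "\<exists>W\<subseteq>seg_vertices P. card W = 5 \<and> common_neighbours_in (seg_vertices P) seg_disjoint W"
    if P: "finite P" "N \<le> card P" "general_position P" for P
  proof -
    obtain c s where c: "c ` {..<2*5} \<subseteq> P" "convex_chain (2*5) c s"
      using N P by blast
    define W where "W = chain_edge c ` {..<5}"
    have "inj_on (chain_edge c) {..<5}"
    proof (rule inj_onI)
      fix j k assume "j \<in> {..<5}" "k \<in> {..<5}" "chain_edge c j = chain_edge c k"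
      moreover have "chain_edge c j \<noteq> {}"
        unfolding chain_edge_def by simp
      ultimately show "j = k"
        using chain_edges_disjoint[OF c(2), of j k] by (metis Int_absorb lessThan_iff)
    qed
    then have "card W = 5"
      unfolding W_def by (simp add: card_image)
    moreover have "W \<subseteq> seg_vertices P"
      unfolding W_def using chain_edge_in_seg_vertices[OF c] by blast
    moreover have "common_neighbours_in (seg_vertices P) seg_disjoint W"
      unfolding common_neighbours_in_def
    proof (intro ballI)
      fix x y assume "x \<in> seg_vertices P" "y \<in> seg_vertices P"
      then have "collinear x" "collinear y"
        unfolding seg_vertices_def by auto
      then obtain k where "k < 5" "x \<inter> chain_edge c k = {}" "y \<inter> chain_edge c k = {}"
        using two_collinear_sets_avoid_chain_edge[OF c(2)] by blast
      then show "\<exists>z\<in>W. seg_disjoint x z \<and> seg_disjoint z y"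
        unfolding W_def seg_disjoint_def by blast
    qed
    ultimately show ?thesis by blast
  qed
  then show ?thesis by blast
qed

lemma segments_with_common_neighbours_in:
  assumes "finite P" "9 \<le> card P" "U \<subseteq> seg_vertices P" "card (seg_vertices P - U) \<le> 3"
  obtains x y where "x \<in> U" "y \<in> U" "x \<noteq> y" "\<not> seg_disjoint x y"
    "\<And>w. w \<in> seg_vertices P \<Longrightarrow> seg_disjoint x w \<Longrightarrow> seg_disjoint w y \<Longrightarrow> w \<in> U"
proof -
  let ?hull = "\<lambda>e. convex hull e"
  have bij: "bij_betw ?hull (nsets P 2) (seg_vertices P)"
    by (rule bij_betw_convex_hull_seg_vertices)
  define W where "W = {e \<in> nsets P 2. convex hull e \<notin> U}"
  have W: "W \<subseteq> nsets P 2"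
    unfolding W_def by blast
  have "?hull ` W = ?hull ` nsets P 2 - U"
    unfolding W_def by blast
  then have image_W: "?hull ` W = seg_vertices P - U"
    using bij_betw_imp_surj_on[OF bij] by simp
  have "card W = card (?hull ` W)"
    using card_image[OF inj_on_subset[OF bij_betw_imp_inj_on[OF bij] W]] by simp
  then obtain e f where ef: "e \<in> nsets P 2" "f \<in> nsets P 2" "e \<notin> W" "f \<notin> W" "e \<noteq> f"
      "e \<inter> f \<noteq> {}" and hit: "\<forall>w\<in>W. w \<inter> (e \<union> f) \<noteq> {}"
    using exists_hitting_pairs[OF assms(1,2) W] assms(4) unfolding image_W by auto
  show ?thesis
  proof
    show "convex hull e \<in> U" "convex hull f \<in> U"
      using ef(1-4) unfolding W_def by simp_all
    show "convex hull e \<noteq> convex hull f"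
      using ef(5) inj_onD[OF bij_betw_imp_inj_on[OF bij] _ ef(1,2)] by blast
    have "e \<inter> f \<subseteq> convex hull e \<inter> convex hull f"
      using hull_subset[of e convex] hull_subset[of f convex] by blast
    then show "\<not> seg_disjoint (convex hull e) (convex hull f)"
      using ef(6) unfolding seg_disjoint_def by blast
  next
    fix w assume w: "w \<in> seg_vertices P" "seg_disjoint (convex hull e) w" "seg_disjoint w (convex hull f)"
    show "w \<in> U"
    proof (rule ccontr)
      assume "w \<notin> U"
      then have "w \<in> ?hull ` W"
        using w(1) unfolding image_W by blast
      then obtain g where "g \<in> W" "w = convex hull g"
        by blast
      then have "g \<inter> (e \<union> f) \<noteq> {}" "g \<inter> (e \<union> f) \<subseteq> w \<inter> (convex hull e \<union> convex hull f)"
        using hit hull_subset[of g convex] hull_subset[of e convex] hull_subset[of f convex] by auto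
      then show False
        using w(2,3) unfolding seg_disjoint_def by blast
    qed
  qed
qed

lemma mu_seg_vertices_le:
  assumes "finite P" "9 \<le> card P"
    and "common_neighbours_in (seg_vertices P) seg_disjoint (seg_vertices P)"
  shows "mu (seg_vertices P) seg_disjoint + 4 \<le> card P choose 2"
proof (rule ccontr)
  let ?V = "seg_vertices P"
  assume contra: "\<not> ?thesis"
  obtain U where U: "mutual_visibility_set ?V seg_disjoint U" "card U = mu ?V seg_disjoint"
    using mu_attained[OF finite_seg_vertices[OF assms(1)]] by metis
  have UV: "U \<subseteq> ?V"
    using U(1) unfolding mutual_visibility_set_def by blast
  have "card (?V - U) \<le> 3"
    using contra U(2) card_seg_vertices[of P]
      card_Diff_subset[OF finite_subset[OF UV finite_seg_vertices[OF assms(1)]] UV] by linarith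
  then obtain x y where xy: "x \<in> U" "y \<in> U" "x \<noteq> y" "\<not> seg_disjoint x y"
    and inside: "\<And>w. w \<in> ?V \<Longrightarrow> seg_disjoint x w \<Longrightarrow> seg_disjoint w y \<Longrightarrow> w \<in> U"
    using segments_with_common_neighbours_in[OF assms(1,2) UV] by blast
  obtain z where "z \<in> ?V" "seg_disjoint x z" "seg_disjoint z y"
    using assms(3) xy(1,2) UV unfolding common_neighbours_in_def by blast
  then have "\<not> mutually_visible ?V seg_disjoint U x y"
    using xy UV inside by (intro not_mutually_visible) auto
  then show False
    using U(1) xy unfolding mutual_visibility_set_def by blast
qed

theorem theorem4:
  shows "\<exists>N::nat. \<forall>P :: (real^2) set. finite P \<and> card P \<ge> N \<and> general_position P \<longrightarrow>
     int (card P choose 2) - 5 \<le> int (mu (seg_vertices P) seg_disjoint) \<and>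
     int (mu (seg_vertices P) seg_disjoint) \<le> int (card P choose 2) - 4"
proof -
  obtain N where N: "\<forall>P. finite P \<and> N \<le> card P \<and> general_position P \<longrightarrow>
     (\<exists>W\<subseteq>seg_vertices P. card W = 5 \<and> common_neighbours_in (seg_vertices P) seg_disjoint W)"
    using ramsey_common_disjoint_segments by blast
  have "int (card P choose 2) - 5 \<le> int (mu (seg_vertices P) seg_disjoint) \<and>
     int (mu (seg_vertices P) seg_disjoint) \<le> int (card P choose 2) - 4"
    if P: "finite P" "max N 9 \<le> card P" "general_position P" for P :: "(real^2) set"
  proof -
    let ?V = "seg_vertices P"
    obtain W where W: "W \<subseteq> ?V" "card W = 5" "common_neighbours_in ?V seg_disjoint W"
      using N P by auto
    have "card ?V - 5 \<le> mu ?V seg_disjoint"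
      using card_Diff_le_mu[OF finite_seg_vertices[OF P(1)] W(1,3)] W(2) by simp
    moreover have "5 \<le> card ?V"
      using card_mono[OF finite_seg_vertices[OF P(1)] W(1)] W(2) by simp
    moreover have "common_neighbours_in ?V seg_disjoint ?V"
      using W(1,3) unfolding common_neighbours_in_def by blast
    then have "mu ?V seg_disjoint + 4 \<le> card P choose 2"
      using P(2) by (intro mu_seg_vertices_le[OF P(1)]) simp_all
    ultimately show ?thesis
      unfolding card_seg_vertices by linarith
  qed
  then show ?thesis
    by blast
qed

end
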